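(* Let $\mathcal{I}$ be a countable nonempty set of database instances, $\mathcal{L}$ a query language, and $p$ an instance-independent pricing function. The following are equivalent: (1) $p$ has no information arbitrage; (2) there is a function $f:\Pi^{\mathcal{L}}_{\mathcal{I}}\to\mathbb{R}_{\ge 0}$ that is monotone over $\Pi^{\mathcal{L}}_{\mathcal{I}}$ such that $p(\mathbf{Q})=f(\mathcal{P}_{\mathbf{Q}})$ for all $\mathbf{Q}\in B(\mathcal{L})$.
   Context: A query is a deterministic function on $\mathcal{I}$. A query bundle $\mathbf{Q}$ is a finite tuple of queries from $\mathcal{L}$, evaluated componentwise; $B(\mathcal{L})$ is the set of finite query bundles, closed under union (concatenation). An instance-independent pricing function assigns a price $p(\mathbf{Q})\ge 0$ to each $\mathbf{Q}\in B(\mathcal{L})$. $\mathbf{Q}_2\twoheadrightarrow\mathbf{Q}_1$ means: for all $D',D''\in\mathcal{I}$, $\mathbf{Q}_2(D')=\mathbf{Q}_2(D'')$ implies $\mathbf{Q}_1(D')=\mathbf{Q}_1(D'')$. $p$ has no information arbitrage if $\mathbf{Q}_2\twoheadrightarrow\mathbf{Q}_1$ implies $p(\mathbf{Q}_2)\ge p(\mathbf{Q}_1)$. $\mathcal{P}_{\mathbf{Q}}$ is the partition of $\mathcal{I}$ into the equivalence classes of $D\sim D'\iff \mathbf{Q}(D)=\mathbf{Q}(D')$. For partitions, $\mathcal{P}_1\succeq\mathcal{P}_2$ ($\mathcal{P}_1$ refines $\mathcal{P}_2$) if every block of $\mathcal{P}_1$ is contained in some block of $\mathcal{P}_2$. $\Pi^{\mathcal{L}}_{\mathcal{I}}=\{\mathcal{P}_{\mathbf{Q}}:\mathbf{Q}\in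 B(\mathcal{L})\}$, ordered by $\succeq$. $f$ is monotone over $\Pi^{\mathcal{L}}_{\mathcal{I}}$ if $\mathcal{P}_1\succeq\mathcal{P}_2$ implies $f(\mathcal{P}_1)\ge f(\mathcal{P}_2)$. *)

theory Defs
  imports Complex_Main "HOL-Library.Countable_Set"
begin

(* A query bundle is a finite tuple (list) of queries from L, evaluated componentwise. *)

definition bundles :: "('i \<Rightarrow> 'o) set \<Rightarrow> ('i \<Rightarrow> 'o) list set" where
  "bundles L = {Qs. set Qs \<subseteq> L}"

definition eval_bundle :: "('i \<Rightarrow> 'o) list \<Rightarrow> 'i \<Rightarrow> 'o list" where
  "eval_bundle Qs D = map (\<lambda>q. q D) Qs"

definition determines :: "'i set \<Rightarrow> ('i \<Rightarrow> 'o) list \<Rightarrow> ('i \<Rightarrow> 'o) list \<Rightarrow> bool" where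
  "determines I Q2 Q1 \<longleftrightarrow>
     (\<forall>D'\<in>I. \<forall>D''\<in>I. eval_bundle Q2 D' = eval_bundle Q2 D'' \<longrightarrow> eval_bundle Q1 D' = eval_bundle Q1 D'')"

definition no_info_arbitrage ::
  "'i set \<Rightarrow> ('i \<Rightarrow> 'o) set \<Rightarrow> (('i \<Rightarrow> 'o) list \<Rightarrow> real) \<Rightarrow> bool" where
  "no_info_arbitrage I L p \<longleftrightarrow>
     (\<forall>Q1\<in>bundles L. \<forall>Q2\<in>bundles L. determines I Q2 Q1 \<longrightarrow> p Q2 \<ge> p Q1)"

definition bundle_partition :: "'i set \<Rightarrow> ('i \<Rightarrow> 'o) list \<Rightarrow> 'i set set" where
  "bundle_partition I Q = (\<lambda>D. {D'\<in>I. eval_bundle Q D' = eval_bundle Q D}) ` I"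

definition refines :: "'i set set \<Rightarrow> 'i set set \<Rightarrow> bool" where
  "refines P1 P2 \<longleftrightarrow> (\<forall>B1\<in>P1. \<exists>B2\<in>P2. B1 \<subseteq> B2)"

definition partitions_of :: "'i set \<Rightarrow> ('i \<Rightarrow> 'o) set \<Rightarrow> 'i set set set" where
  "partitions_of I L = bundle_partition I ` bundles L"

definition monotone_over :: "'i set set set \<Rightarrow> ('i set set \<Rightarrow> real) \<Rightarrow> bool" where
  "monotone_over \<Pi> f \<longleftrightarrow> (\<forall>P1\<in>\<Pi>. \<forall>P2\<in>\<Pi>. refines P1 P2 \<longrightarrow> f P1 \<ge> f P2)"

end

theory Submission imports Defs begin

text \<open>Since \<open>Q\<^sub>2 \<twoheadrightarrow> Q\<^sub>1\<close> holds exactly when the partition of \<open>Q\<^sub>2\<close> refines that of \<open>Q\<^sub>1\<close>,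
  no information arbitrage says that \<open>p\<close> is monotone along refinement of the induced partitions.
  Applying this in both directions shows that bundles with the same partition have the same price,
  so \<open>p\<close> factors through \<open>Q \<mapsto> \<P>\<^sub>Q\<close>, and the factor is monotone.\<close>

lemma bundle_block_in_bundle_partition:
  "D \<in> I \<Longrightarrow> {D'\<in>I. eval_bundle Q D' = eval_bundle Q D} \<in> bundle_partition I Q"
  unfolding bundle_partition_def by (rule imageI)

lemma bundle_partitionE:
  assumes "B \<in> bundle_partition I Q"
  obtains D where "D \<in> I" and "B = {D'\<in>I. eval_bundle Q D' = eval_bundle Q D}"
  using assms unfolding bundle_partition_def by blast

lemma refines_bundle_partition_iff_determines:
  "refines (bundle_partition I Q2) (bundle_partition I Q1) \<longleftrightarrow> determines I Q2 Q1"
proof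
  assume ref: "refines (bundle_partition I Q2) (bundle_partition I Q1)"
  show "determines I Q2 Q1"
    unfolding determines_def
  proof (intro ballI impI)
    fix D' D'' assume D: "D' \<in> I" "D'' \<in> I" "eval_bundle Q2 D' = eval_bundle Q2 D''"
    obtain B where B: "B \<in> bundle_partition I Q1"
      and sub: "{D\<in>I. eval_bundle Q2 D = eval_bundle Q2 D'} \<subseteq> B"
      using ref bundle_block_in_bundle_partition[OF D(1)] unfolding refines_def by blast
    obtain E where "B = {D\<in>I. eval_bundle Q1 D = eval_bundle Q1 E}"
      using B by (rule bundle_partitionE)
    moreover have "D' \<in> B" and "D'' \<in> B"
      using D sub by auto
    ultimately show "eval_bundle Q1 D' = eval_bundle Q1 D''"
      by (metis (mono_tags, lifting) mem_Collect_eq)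
  qed
next
  assume det: "determines I Q2 Q1"
  show "refines (bundle_partition I Q2) (bundle_partition I Q1)"
    unfolding refines_def
  proof
    fix B assume "B \<in> bundle_partition I Q2"
    then obtain D where D: "D \<in> I" and B: "B = {D'\<in>I. eval_bundle Q2 D' = eval_bundle Q2 D}"
      by (rule bundle_partitionE)
    have "B \<subseteq> {D'\<in>I. eval_bundle Q1 D' = eval_bundle Q1 D}"
      using det D B unfolding determines_def by blast
    with bundle_block_in_bundle_partition[OF D]
    show "\<exists>B'\<in>bundle_partition I Q1. B \<subseteq> B'" by blast
  qed
qed

lemma refines_refl: "refines P P"
  unfolding refines_def by blast

lemma bundle_partition_in_partitions_of:
  "Q \<in> bundles L \<Longrightarrow> bundle_partition I Q \<in> partitions_of I L"
  unfolding partitions_of_def by (rule imageI)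

lemma no_info_arbitrage_mono_refines:
  assumes "no_info_arbitrage I L p" "Q1 \<in> bundles L" "Q2 \<in> bundles L"
    and "refines (bundle_partition I Q2) (bundle_partition I Q1)"
  shows "p Q1 \<le> p Q2"
  using assms unfolding refines_bundle_partition_iff_determines no_info_arbitrage_def by blast

lemma no_info_arbitrage_price_eq:
  assumes "no_info_arbitrage I L p" "Q1 \<in> bundles L" "Q2 \<in> bundles L"
    and "bundle_partition I Q1 = bundle_partition I Q2"
  shows "p Q1 = p Q2"
  using no_info_arbitrage_mono_refines[OF assms(1,2,3)] no_info_arbitrage_mono_refines[OF assms(1,3,2)]
  unfolding assms(4) by (simp add: refines_refl)

definition partition_price ::
    "'i set \<Rightarrow> ('i \<Rightarrow> 'o) set \<Rightarrow> (('i \<Rightarrow> 'o) list \<Rightarrow> real) \<Rightarrow> 'i set set \<Rightarrow> real" where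
  "partition_price I L p P = p (SOME Q. Q \<in> bundles L \<and> bundle_partition I Q = P)"

lemma partition_price_witness:
  assumes "P \<in> partitions_of I L"
  obtains Q where "Q \<in> bundles L" "bundle_partition I Q = P" "partition_price I L p P = p Q"
proof -
  have "\<exists>Q. Q \<in> bundles L \<and> bundle_partition I Q = P"
    using assms unfolding partitions_of_def by (rule imageE) blast
  from someI_ex[OF this] show thesis
    by (intro that[of "SOME Q. Q \<in> bundles L \<and> bundle_partition I Q = P"])
      (simp_all add: partition_price_def)
qed

lemma partition_price_nonneg:
  assumes "\<forall>Q\<in>bundles L. p Q \<ge> 0" and "P \<in> partitions_of I L"
  shows "partition_price I L p P \<ge> 0"
proof -
  obtain Q where "Q \<in> bundles L" "partition_price I L p P = p Q"
    using partition_price_witness[OF assms(2)] by metis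
  with assms(1) show ?thesis by simp
qed

lemma partition_price_bundle_partition:
  assumes "no_info_arbitrage I L p" "Q \<in> bundles L"
  shows "partition_price I L p (bundle_partition I Q) = p Q"
proof -
  obtain Q' where "Q' \<in> bundles L" "bundle_partition I Q' = bundle_partition I Q"
      "partition_price I L p (bundle_partition I Q) = p Q'"
    using partition_price_witness[OF bundle_partition_in_partitions_of[OF assms(2)]] .
  with no_info_arbitrage_price_eq[OF assms(1) _ assms(2)] show ?thesis by simp
qed

lemma monotone_over_partition_price:
  assumes "no_info_arbitrage I L p"
  shows "monotone_over (partitions_of I L) (partition_price I L p)"
  unfolding monotone_over_def
proof (intro ballI impI)
  fix P1 P2 assume "P1 \<in> partitions_of I L" "P2 \<in> partitions_of I L" and ref: "refines P1 P2"
  obtain Q1 where Q1: "Q1 \<in> bundles L" "bundle_partition I Q1 = P1" "partition_price I L p P1 = p Q1"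
    using partition_price_witness[OF \<open>P1 \<in> partitions_of I L\<close>] .
  obtain Q2 where Q2: "Q2 \<in> bundles L" "bundle_partition I Q2 = P2" "partition_price I L p P2 = p Q2"
    using partition_price_witness[OF \<open>P2 \<in> partitions_of I L\<close>] .
  show "partition_price I L p P2 \<le> partition_price I L p P1"
    using no_info_arbitrage_mono_refines[OF assms Q2(1) Q1(1)] ref Q1 Q2 by simp
qed

lemma no_info_arbitrage_if_monotone_factor:
  assumes "monotone_over (partitions_of I L) f"
    and "\<forall>Q\<in>bundles L. p Q = f (bundle_partition I Q)"
  shows "no_info_arbitrage I L p"
  unfolding no_info_arbitrage_def
proof (intro ballI impI)
  fix Q1 Q2 assume Q: "Q1 \<in> bundles L" "Q2 \<in> bundles L" and "determines I Q2 Q1"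
  then have "refines (bundle_partition I Q2) (bundle_partition I Q1)"
    by (simp add: refines_bundle_partition_iff_determines)
  with assms(1) Q have "f (bundle_partition I Q1) \<le> f (bundle_partition I Q2)"
    unfolding monotone_over_def by (simp add: bundle_partition_in_partitions_of)
  with assms(2) Q show "p Q1 \<le> p Q2" by simp
qed

theorem theorem4:
  fixes I :: "'i set" and L :: "('i \<Rightarrow> 'o) set" and p :: "('i \<Rightarrow> 'o) list \<Rightarrow> real"
  assumes "countable I" and "I \<noteq> {}"
    and "\<forall>Q\<in>bundles L. p Q \<ge> 0"
  shows "no_info_arbitrage I L p \<longleftrightarrow>
    (\<exists>f :: 'i set set \<Rightarrow> real.
        (\<forall>P\<in>partitions_of I L. f P \<ge> 0) \<and>
        monotone_over (partitions_of I L) f \<and>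
        (\<forall>Q\<in>bundles L. p Q = f (bundle_partition I Q)))"
proof
  assume na: "no_info_arbitrage I L p"
  have "\<forall>P\<in>partitions_of I L. partition_price I L p P \<ge> 0"
    using partition_price_nonneg assms(3) by blast
  moreover have "\<forall>Q\<in>bundles L. p Q = partition_price I L p (bundle_partition I Q)"
    using partition_price_bundle_partition[OF na] by simp
  ultimately show "\<exists>f. (\<forall>P\<in>partitions_of I L. f P \<ge> 0) \<and> monotone_over (partitions_of I L) f \<and>
      (\<forall>Q\<in>bundles L. p Q = f (bundle_partition I Q))"
    using monotone_over_partition_price[OF na] by blast
next
  assume "\<exists>f. (\<forall>P\<in>partitions_of I L. f P \<ge> 0) \<and> monotone_over (partitions_of I L) f \<and>
      (\<forall>Q\<in>bundles L. p Q = f (bundle_partition I Q))"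
  then show "no_info_arbitrage I L p"
    using no_info_arbitrage_if_monotone_factor by blast
qed

end
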